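(* The recurrence $x_n=x_{n-1}+x_{n-2}+2x_{n-3}$ is not congenial; that is, there is no finite bound $B$ such that for every positive integer $n$, either $t_{1,1,2}(n)=\infty$ or $t_{1,1,2}(n)\le B$.
   Context: For non-negative integers $a,b,c$, a positive $k$-element solution of the recurrence $x_i=ax_{i-1}+bx_{i-2}+cx_{i-3}$ is an integer sequence $\langle x_i\rangle_{i=1}^k$ satisfying the recurrence for $4\le i\le k$ with $x_1,x_2,x_3>0$; it terminates at $x_k$. For a positive integer $n$, $k_{a,b,c}(n)$ is the largest $k$ such that there is a positive $k$-element solution terminating at $n$, and $t_{a,b,c}(n)$ is the number of positive $k_{a,b,c}(n)$-element solutions terminating at $n$. The recurrence is congenial if there is a finite $B$ such that for all $n$, $t_{a,b,c}(n)=\infty$ or $t_{a,b,c}(n)\le B$. *)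

theory Defs
  imports Main "HOL-Library.Extended_Nat"
begin

text \<open>A positive k-element solution x_1,...,x_k is represented as a list xs of
  integers of length k (0-based: xs!0 = x_1).  Since x_1,x_2,x_3 > 0 must be
  meaningful, k \<ge> 3.\<close>

definition pos_solution :: "nat \<Rightarrow> nat \<Rightarrow> nat \<Rightarrow> int list \<Rightarrow> bool" where
  "pos_solution a b c xs \<longleftrightarrow>
     length xs \<ge> 3 \<and> xs ! 0 > 0 \<and> xs ! 1 > 0 \<and> xs ! 2 > 0 \<and>
     (\<forall>i. 3 \<le> i \<and> i < length xs \<longrightarrow>
        xs ! i = int a * xs ! (i - 1) + int b * xs ! (i - 2) + int c * xs ! (i - 3))"

definition sols_ending :: "nat \<Rightarrow> nat \<Rightarrow> nat \<Rightarrow> int \<Rightarrow> nat \<Rightarrow> int list set" where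
  "sols_ending a b c n k = {xs. pos_solution a b c xs \<and> length xs = k \<and> last xs = n}"

definition kmax :: "nat \<Rightarrow> nat \<Rightarrow> nat \<Rightarrow> int \<Rightarrow> nat" where
  "kmax a b c n = (GREATEST k. sols_ending a b c n k \<noteq> {})"

definition tcount :: "nat \<Rightarrow> nat \<Rightarrow> nat \<Rightarrow> int \<Rightarrow> enat" where
  "tcount a b c n =
     (if finite (sols_ending a b c n (kmax a b c n))
      then enat (card (sols_ending a b c n (kmax a b c n))) else \<infinity>)"

definition congenial :: "nat \<Rightarrow> nat \<Rightarrow> nat \<Rightarrow> bool" where
  "congenial a b c \<longleftrightarrow>
     (\<exists>B::nat. \<forall>n::int. n > 0 \<longrightarrow> tcount a b c n = \<infinity> \<or> tcount a b c n \<le> enat B)"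

end

(* The characteristic polynomial t^3 - t^2 - t - 2 factors as (t - 2)(t^2 + t + 1), so the window
   sums x_i + x_(i+1) + x_(i+2) double at every step and x_(i+3) = x_i + 2^i S, where S is the sum
   of the three initial terms.  Over 3m steps the j-th term therefore grows by 2^j d S, where
   8^m = 7d + 1.  A solution with 3p + 3 terms ends at x_3 + 4dS, so every initial triple
   (a, 8d - 1 - a, 1) gives one ending at n = 32d^2 + 1: there are 8d - 2 of them, and only
   finitely many in total.  A solution with 3p + 4 terms would end at x_1 + (8d + 1)S, which is
   never n; since a longer solution can be truncated to 3p + 4 terms, 3p + 3 is the maximal
   length, and t(n) >= 8d - 2 >= 8p - 2 is finite but unbounded in p. *)
theory Submission
  imports Defs
begin

fun linrec :: "nat \<Rightarrow> nat \<Rightarrow> nat \<Rightarrow> int \<Rightarrow> int \<Rightarrow> int \<Rightarrow> nat \<Rightarrow> int" where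
  "linrec a b c x y z 0 = x"
| "linrec a b c x y z (Suc 0) = y"
| "linrec a b c x y z (Suc (Suc 0)) = z"
| "linrec a b c x y z (Suc (Suc (Suc i))) =
     int a * linrec a b c x y z (Suc (Suc i)) + int b * linrec a b c x y z (Suc i)
     + int c * linrec a b c x y z i"

lemma linrec_add3:
  "linrec a b c x y z (i + 3) =
     int a * linrec a b c x y z (i + 2) + int b * linrec a b c x y z (i + 1)
     + int c * linrec a b c x y z i"
  by (simp add: numeral_eq_Suc)

lemma pos_solution_map_linrec:
  assumes "0 < x" "0 < y" "0 < z" "3 \<le> k"
  shows "pos_solution a b c (map (linrec a b c x y z) [0..<k])"
  unfolding pos_solution_def
proof (intro conjI allI impI)
  fix i assume i: "3 \<le> i \<and> i < length (map (linrec a b c x y z) [0..<k])"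
  then obtain j where "i = j + 3" by (metis add.commute le_Suc_ex)
  with i show "map (linrec a b c x y z) [0..<k] ! i =
      int a * map (linrec a b c x y z) [0..<k] ! (i - 1)
      + int b * map (linrec a b c x y z) [0..<k] ! (i - 2)
      + int c * map (linrec a b c x y z) [0..<k] ! (i - 3)"
    using linrec_add3[of a b c x y z j] by simp
qed (use assms in \<open>auto simp: numeral_eq_Suc\<close>)

lemma pos_solution_eq_map_linrec:
  assumes "pos_solution a b c xs"
  shows "xs = map (linrec a b c (xs!0) (xs!1) (xs!2)) [0..<length xs]"
proof (rule nth_equalityI)
  fix i assume "i < length xs"
  then show "xs ! i = map (linrec a b c (xs!0) (xs!1) (xs!2)) [0..<length xs] ! i"
  proof (induction i rule: less_induct)
    case (less i)
    show ?case
    proof (cases "i < 3")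
      case True
      then have "i = 0 \<or> i = 1 \<or> i = 2" by auto
      with less.prems show ?thesis by (auto simp: numeral_eq_Suc)
    next
      case False
      then obtain j where j: "i = j + 3" by (metis add.commute le_Suc_ex not_less)
      have "xs ! i = int a * xs ! (j + 2) + int b * xs ! (j + 1) + int c * xs ! j"
        using assms False less.prems j unfolding pos_solution_def by auto
      with less.prems j show ?thesis
        using less.IH[of "j + 2"] less.IH[of "j + 1"] less.IH[of j]
          linrec_add3[of a b c "xs!0" "xs!1" "xs!2" j] by simp
    qed
  qed
qed simp

lemma pos_solution_nth_pos:
  assumes "pos_solution a b c xs" "0 < a + b + c" "i < length xs"
  shows "0 < xs ! i"
  using assms(3)
proof (induction i rule: less_induct)
  case (less i)
  show ?case
  proof (cases "i < 3")
    case True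
    then have "i = 0 \<or> i = 1 \<or> i = 2" by auto
    with assms(1) show ?thesis unfolding pos_solution_def by auto
  next
    case False
    then obtain j where j: "i = j + 3" by (metis add.commute le_Suc_ex not_less)
    have rec: "xs ! i = int a * xs ! (j + 2) + int b * xs ! (j + 1) + int c * xs ! j"
      using assms(1) False less.prems j unfolding pos_solution_def by auto
    have "0 < xs ! (j + 2)" "0 < xs ! (j + 1)" "0 < xs ! j"
      using less.IH less.prems j by auto
    with assms(2) show ?thesis unfolding rec
      by (smt (verit) mult_nonneg_nonneg mult_pos_pos of_nat_0_le_iff of_nat_0_less_iff
          add_gr_0)
  qed
qed

lemma pos_solution_drop:
  assumes "pos_solution a b c xs" "0 < a + b + c" "t + 3 \<le> length xs"
  shows "pos_solution a b c (drop t xs)"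
  unfolding pos_solution_def
proof (intro conjI allI impI)
  fix i assume "3 \<le> i \<and> i < length (drop t xs)"
  with assms(1) show "drop t xs ! i = int a * drop t xs ! (i - 1)
      + int b * drop t xs ! (i - 2) + int c * drop t xs ! (i - 3)"
    unfolding pos_solution_def by (auto simp: add.commute[of t] dest!: spec[of _ "t + i"])
qed (use assms pos_solution_nth_pos in auto)

lemma kmax_eqI:
  assumes "sols_ending a b c n k \<noteq> {}"
    and "\<And>xs. pos_solution a b c xs \<Longrightarrow> last xs = n \<Longrightarrow> length xs \<le> k"
  shows "kmax a b c n = k"
  unfolding kmax_def
proof (rule Greatest_equality)
  fix l assume "sols_ending a b c n l \<noteq> {}"
  with assms(2) show "l \<le> k" unfolding sols_ending_def by auto
qed (use assms(1) in simp)

lemma finite_sols_ending: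
  assumes "\<And>xs. xs \<in> sols_ending a b c n k \<Longrightarrow> xs!0 \<le> N \<and> xs!1 \<le> N \<and> xs!2 \<le> N"
  shows "finite (sols_ending a b c n k)"
proof (rule finite_subset)
  show "sols_ending a b c n k \<subseteq>
      (\<lambda>(x, y, z). map (linrec a b c x y z) [0..<k]) ` ({1..N} \<times> {1..N} \<times> {1..N})"
  proof
    fix xs assume xs: "xs \<in> sols_ending a b c n k"
    then have "pos_solution a b c xs" "length xs = k" unfolding sols_ending_def by auto
    with assms[OF xs] show "xs \<in>
        (\<lambda>(x, y, z). map (linrec a b c x y z) [0..<k]) ` ({1..N} \<times> {1..N} \<times> {1..N})"
      using pos_solution_eq_map_linrec
      by (intro image_eqI[of _ _ "(xs!0, xs!1, xs!2)"]) (auto simp: pos_solution_def)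
  qed
qed simp

lemma linrec_112_window_sum:
  "linrec 1 1 2 x y z i + linrec 1 1 2 x y z (i + 1) + linrec 1 1 2 x y z (i + 2)
     = 2 ^ i * (x + y + z)"
proof (induction i)
  case 0
  then show ?case by (simp add: numeral_eq_Suc)
next
  case (Suc i)
  then show ?case using linrec_add3[of 1 1 2 x y z i] by simp
qed

lemma linrec_112_add3:
  "linrec 1 1 2 x y z (i + 3) = linrec 1 1 2 x y z i + 2 ^ i * (x + y + z)"
  using linrec_add3[of 1 1 2 x y z i] linrec_112_window_sum[of x y z i] by simp

lemma linrec_112_closed:
  "7 * linrec 1 1 2 x y z (3 * m + j)
     = 7 * linrec 1 1 2 x y z j + 2 ^ j * (8 ^ m - 1) * (x + y + z)"
proof (induction m)
  case (Suc m)
  have "3 * Suc m + j = (3 * m + j) + 3" by simp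
  then have "linrec 1 1 2 x y z (3 * Suc m + j)
      = linrec 1 1 2 x y z (3 * m + j) + 2 ^ (3 * m + j) * (x + y + z)"
    using linrec_112_add3 by presburger
  also have "\<dots> = linrec 1 1 2 x y z (3 * m + j) + 2 ^ j * 8 ^ m * (x + y + z)"
    by (simp add: power_add power_mult)
  finally show ?case using Suc.IH by (simp add: algebra_simps)
qed simp

lemma last_pos_solution_112:
  assumes "pos_solution 1 1 2 xs" "length xs = 3 * m + j + 1" "8 ^ m = 7 * d + 1"
  shows "last xs = xs ! j + 2 ^ j * d * (xs!0 + xs!1 + xs!2)"
proof -
  let ?u = "linrec 1 1 2 (xs!0) (xs!1) (xs!2)"
  have nth: "xs ! i = ?u i" if "i < length xs" for i
    using pos_solution_eq_map_linrec[OF assms(1)] that by (metis diff_zero length_map length_upt nth_map_upt add_0)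
  have "last xs = ?u (3 * m + j)"
    using assms(2) nth[of "3 * m + j"] last_conv_nth[of xs] by fastforce
  moreover have "xs ! j = ?u j"
    using assms(2) nth[of j] by simp
  ultimately show ?thesis
    using linrec_112_closed[of "xs!0" "xs!1" "xs!2" m j] assms(3) by simp
qed

lemma eight_power_eq: "\<exists>d::int. 8 ^ p = 7 * d + 1 \<and> int p \<le> d"
proof (induction p)
  case (Suc p)
  then obtain d :: int where "8 ^ p = 7 * d + 1" "int p \<le> d" by blast
  then show ?case by (intro exI[of _ "8 * d + 1"]) auto
qed simp

(* With S = u + v + w the left side lies in [(8d + 1)S + 1, (8d + 2)S - 2]; no S fits. *)
lemma sum_ne_32_sq_plus_1:
  fixes d u v w :: int
  assumes "0 \<le> d" "0 < u" "0 < v" "0 < w"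
  shows "u + (8 * d + 1) * (u + v + w) \<noteq> 32 * d\<^sup>2 + 1"
proof
  assume eq: "u + (8 * d + 1) * (u + v + w) = 32 * d\<^sup>2 + 1"
  define S where "S = u + v + w"
  show False
  proof (cases "4 * d \<le> S")
    case True
    then have "(8 * d + 1) * (4 * d) \<le> (8 * d + 1) * S"
      using assms(1) by (intro mult_left_mono) auto
    then have "d = 0"
      using eq assms unfolding S_def by (simp add: algebra_simps power2_eq_square)
    with eq assms show False by simp
  next
    case False
    then have "(8 * d + 2) * S \<le> (8 * d + 2) * (4 * d - 1)"
      using assms(1) by (intro mult_left_mono) auto
    with eq assms show False unfolding S_def by (simp add: algebra_simps power2_eq_square)
  qed
qed

lemma pos_solution_112_length_le:
  assumes "pos_solution 1 1 2 xs" "last xs = 32 * d\<^sup>2 + 1" "8 ^ p = 7 * d + 1"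
  shows "length xs \<le> 3 * p + 3"
proof (rule ccontr)
  assume long: "\<not> length xs \<le> 3 * p + 3"
  define ys where "ys = drop (length xs - (3 * p + 4)) xs"
  have ys: "pos_solution 1 1 2 ys"
    unfolding ys_def using long by (intro pos_solution_drop[OF assms(1)]) auto
  have "length ys = 3 * (p + 1) + 0 + 1" "last ys = last xs"
    unfolding ys_def using long by (auto simp: last_drop)
  moreover have "8 ^ (p + 1) = 7 * (8 * d + 1) + (1::int)"
    using assms(3) by simp
  ultimately have "32 * d\<^sup>2 + 1 = ys ! 0 + (8 * d + 1) * (ys!0 + ys!1 + ys!2)"
    using last_pos_solution_112[OF ys, of "p + 1" 0 "8 * d + 1"] assms(2) by simp
  moreover have "0 \<le> d"
    using assms(3) one_le_power[of "8::int" p] by linarith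
  moreover have "0 < ys ! 0" "0 < ys ! 1" "0 < ys ! 2"
    using ys unfolding pos_solution_def by auto
  ultimately show False
    using sum_ne_32_sq_plus_1 by metis
qed

lemma sols_ending_112_witness:
  assumes "8 ^ p = 7 * d + 1" "1 \<le> x" "x \<le> 8 * d - 2"
  shows "map (linrec 1 1 2 x (8 * d - 1 - x) 1) [0..<3 * p + 3]
           \<in> sols_ending 1 1 2 (32 * d\<^sup>2 + 1) (3 * p + 3)"
proof -
  let ?xs = "map (linrec 1 1 2 x (8 * d - 1 - x) 1) [0..<3 * p + 3]"
  have sol: "pos_solution 1 1 2 ?xs"
    using assms(2,3) by (intro pos_solution_map_linrec) auto
  have "?xs ! 0 = x" "?xs ! 1 = 8 * d - 1 - x" "?xs ! 2 = 1"
    by (simp_all del: upt_Suc)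
  then have "last ?xs = 32 * d\<^sup>2 + 1"
    using last_pos_solution_112[OF sol _ assms(1), of 2] by (simp add: power2_eq_square)
  with sol show ?thesis unfolding sols_ending_def by simp
qed

lemma tcount_112_lower_bound:
  assumes "8 ^ p = 7 * d + 1" "0 < d"
  shows "tcount 1 1 2 (32 * d\<^sup>2 + 1) \<noteq> \<infinity>"
    and "enat (nat (8 * d - 2)) \<le> tcount 1 1 2 (32 * d\<^sup>2 + 1)"
proof -
  let ?n = "32 * d\<^sup>2 + 1" and ?k = "3 * p + 3"
  let ?sol = "\<lambda>x. map (linrec 1 1 2 x (8 * d - 1 - x) 1) [0..<?k]"
  have witnesses: "?sol ` {1..8 * d - 2} \<subseteq> sols_ending 1 1 2 ?n ?k"
    using sols_ending_112_witness[OF assms(1)] by auto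
  have "inj_on ?sol {1..8 * d - 2}"
    by (rule inj_on_inverseI[where g = "\<lambda>xs. xs ! 0"]) (simp del: upt_Suc)
  then have card_witnesses: "card (?sol ` {1..8 * d - 2}) = nat (8 * d - 2)"
    by (simp add: card_image)
  have kmax: "kmax 1 1 2 ?n = ?k"
  proof (rule kmax_eqI)
    show "sols_ending 1 1 2 ?n ?k \<noteq> {}"
      using witnesses assms(2) by force
  qed (use pos_solution_112_length_le[OF _ _ assms(1)] in blast)
  have fin: "finite (sols_ending 1 1 2 ?n ?k)"
  proof (rule finite_sols_ending)
    fix xs assume "xs \<in> sols_ending 1 1 2 ?n ?k"
    then have sol: "pos_solution 1 1 2 xs" and "length xs = 3 * p + 2 + 1" "last xs = ?n"
      unfolding sols_ending_def by auto
    then have n: "?n = xs ! 2 + 4 * d * (xs!0 + xs!1 + xs!2)"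
      using last_pos_solution_112[OF sol _ assms(1), of 2] by simp
    have pos: "0 < xs ! 0" "0 < xs ! 1" "0 < xs ! 2"
      using sol unfolding pos_solution_def by auto
    have "xs!0 + xs!1 + xs!2 \<le> (4 * d) * (xs!0 + xs!1 + xs!2)"
      using assms(2) pos mult_right_mono[of 1 "4 * d" "xs!0 + xs!1 + xs!2"] by simp
    with n pos show "xs!0 \<le> ?n \<and> xs!1 \<le> ?n \<and> xs!2 \<le> ?n" by (intro conjI) linarith+
  qed
  have "nat (8 * d - 2) \<le> card (sols_ending 1 1 2 ?n ?k)"
    using card_mono[OF fin witnesses] card_witnesses by simp
  with fin kmax show "tcount 1 1 2 ?n \<noteq> \<infinity>" "enat (nat (8 * d - 2)) \<le> tcount 1 1 2 ?n"
    unfolding tcount_def by simp_all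
qed

theorem lemma6:
  shows "\<not> congenial 1 1 2"
proof
  assume "congenial 1 1 2"
  then obtain B :: nat
    where bound: "\<And>n::int. n > 0 \<Longrightarrow> tcount 1 1 2 n = \<infinity> \<or> tcount 1 1 2 n \<le> enat B"
    unfolding congenial_def by blast
  obtain d :: int where d: "8 ^ (B + 1) = 7 * d + 1" "int (B + 1) \<le> d"
    using eight_power_eq by blast
  let ?n = "32 * d\<^sup>2 + 1"
  have "0 < ?n" by (simp add: add_pos_nonneg)
  have finite: "tcount 1 1 2 ?n \<noteq> \<infinity>" and lower: "enat (nat (8 * d - 2)) \<le> tcount 1 1 2 ?n"
    using tcount_112_lower_bound[of "B + 1" d] d by simp_all
  from bound[OF \<open>0 < ?n\<close>] finite have "tcount 1 1 2 ?n \<le> enat B" by blast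
  with lower have "nat (8 * d - 2) \<le> B" using order.trans enat_ord_simps(1) by metis
  with d(2) show False by simp
qed

end
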